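(* Let $A$ be a braided group in $\mathcal C$, and for a right crossed module $(Z,\mu_r,\Delta_r)$ over $A$ put $\sigma_{Z/A}:=\mu_r\circ(Z\otimes S)\circ\Delta_r$. Then for all right crossed modules $X,Y$ over $A$, $\Psi^{\mathcal{YD}}_{Y,X}\circ\sigma_{(Y\otimes X)/A}\circ\Psi^{\mathcal{YD}}_{X,Y}=\Psi_{Y,X}\circ(\sigma_{Y/A}\otimes\sigma_{X/A})\circ\Psi_{X,Y}$, where $Y\otimes X$ is the tensor product crossed module and $\Psi^{\mathcal{YD}}$ is the braiding of $\mathcal{YD}(\mathcal C)^A_A$.
   Context: $\mathcal C$ is a braided monoidal category, assumed strict, with tensor product $\otimes$, unit $\underline 1$ and braiding $\Psi_{X,Y}:X\otimes Y\to Y\otimes X$. Inside tensor products of morphisms an object name $X$ stands for ${\rm id}_X$. A braided group is a bialgebra $(A,\mu,\eta,\Delta,\epsilon)$ in $\mathcal C$ (with $\Delta\circ\mu=(\mu\otimes\mu)\circ(A\otimes\Psi_{A,A}\otimes A)\circ(\Delta\otimes\Delta)$ and the unit/counit compatibilities) with antipode $S$: $\mu\circ(S\otimes A)\circ\Delta=\eta\circ\epsilon=\mu\circ(A\otimes S)\circ\Delta$. A right crossed module over $A$ is a right $A$-module $\mu_r:X\otimes A\to X$ and right $A$-comodule $\Delta_r:X\to X\otimes A$ such that $(X\otimes\mu)\circ(\Psi_{A,X}\otimes A)\circ(A\otimes(\Delta_r\circ\mu_r))\circ(\Psi_{X,A}\otimes A)\circ(X\otimes\Delta)=(\mu_r\otimes\mu)\circ(X\otimes\Psi_{A,A}\otimes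 A)\circ(\Delta_r\otimes\Delta)$. The tensor product crossed module $X\otimes Y$ has action $(\mu^X_r\otimes\mu^Y_r)\circ(X\otimes\Psi_{Y,A}\otimes A)\circ(X\otimes Y\otimes\Delta)$ and coaction $(X\otimes Y\otimes\mu)\circ(X\otimes\Psi_{A,Y}\otimes A)\circ(\Delta^X_r\otimes\Delta^Y_r)$. The braiding of $\mathcal{YD}(\mathcal C)^A_A$ is $\Psi^{\mathcal{YD}}_{X,Y}:=(Y\otimes\mu^X_r)\circ(\Psi_{X,Y}\otimes A)\circ(X\otimes\Delta^Y_r)$. *)

theory Defs
  imports Main
begin

text \<open>Every element of
  the morphism type is an arrow with domain Dom f and codomain Cod f;
  Cmp C g f is the composite g after f (meaningful when Cod f = Dom g).
  TO is the tensor product on objects, TM on morphisms, Uo the unit object,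
  Br X Y the braiding X tensor Y to Y tensor X.\<close>

record ('o, 'm) bmc =
  Dom :: "'m \<Rightarrow> 'o"
  Cod :: "'m \<Rightarrow> 'o"
  Cmp :: "'m \<Rightarrow> 'm \<Rightarrow> 'm"
  Idm :: "'o \<Rightarrow> 'm"
  TO  :: "'o \<Rightarrow> 'o \<Rightarrow> 'o"
  TM  :: "'m \<Rightarrow> 'm \<Rightarrow> 'm"
  Uo  :: "'o"
  Br  :: "'o \<Rightarrow> 'o \<Rightarrow> 'm"

definition hom :: "('o, 'm) bmc \<Rightarrow> 'm \<Rightarrow> 'o \<Rightarrow> 'o \<Rightarrow> bool" where
  "hom C f X Y \<longleftrightarrow> Dom C f = X \<and> Cod C f = Y"

definition strict_braided_monoidal :: "('o, 'm) bmc \<Rightarrow> bool" where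
  "strict_braided_monoidal C \<longleftrightarrow>
     \<comment> \<open>category\<close>
     (\<forall>X. hom C (Idm C X) X X) \<and>
     (\<forall>f g. Cod C f = Dom C g \<longrightarrow> hom C (Cmp C g f) (Dom C f) (Cod C g)) \<and>
     (\<forall>f. Cmp C f (Idm C (Dom C f)) = f \<and> Cmp C (Idm C (Cod C f)) f = f) \<and>
     (\<forall>f g h. Cod C f = Dom C g \<longrightarrow> Cod C g = Dom C h \<longrightarrow>
        Cmp C h (Cmp C g f) = Cmp C (Cmp C h g) f) \<and>
     \<comment> \<open>tensor bifunctor\<close>
     (\<forall>f g. hom C (TM C f g) (TO C (Dom C f) (Dom C g)) (TO C (Cod C f) (Cod C g))) \<and>
     (\<forall>X Y. TM C (Idm C X) (Idm C Y) = Idm C (TO C X Y)) \<and>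
     (\<forall>f g f' g'. Cod C f = Dom C g \<longrightarrow> Cod C f' = Dom C g' \<longrightarrow>
        TM C (Cmp C g f) (Cmp C g' f') = Cmp C (TM C g g') (TM C f f')) \<and>
     \<comment> \<open>strictness\<close>
     (\<forall>X Y Z. TO C (TO C X Y) Z = TO C X (TO C Y Z)) \<and>
     (\<forall>X. TO C (Uo C) X = X \<and> TO C X (Uo C) = X) \<and>
     (\<forall>f g h. TM C (TM C f g) h = TM C f (TM C g h)) \<and>
     (\<forall>f. TM C (Idm C (Uo C)) f = f \<and> TM C f (Idm C (Uo C)) = f) \<and>
     \<comment> \<open>braiding: natural isomorphism satisfying the hexagon identities\<close>
     (\<forall>X Y. hom C (Br C X Y) (TO C X Y) (TO C Y X)) \<and>
     (\<forall>X Y. \<exists>g. hom C g (TO C Y X) (TO C X Y) \<and>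
        Cmp C g (Br C X Y) = Idm C (TO C X Y) \<and> Cmp C (Br C X Y) g = Idm C (TO C Y X)) \<and>
     (\<forall>f g. Cmp C (Br C (Cod C f) (Cod C g)) (TM C f g) =
            Cmp C (TM C g f) (Br C (Dom C f) (Dom C g))) \<and>
     (\<forall>X Y Z. Br C X (TO C Y Z) =
        Cmp C (TM C (Idm C Y) (Br C X Z)) (TM C (Br C X Y) (Idm C Z))) \<and>
     (\<forall>X Y Z. Br C (TO C X Y) Z =
        Cmp C (TM C (Br C X Z) (Idm C Y)) (TM C (Idm C X) (Br C Y Z)))"

definition braided_group ::
  "('o, 'm) bmc \<Rightarrow> 'o \<Rightarrow> 'm \<Rightarrow> 'm \<Rightarrow> 'm \<Rightarrow> 'm \<Rightarrow> 'm \<Rightarrow> bool" where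
  "braided_group C A mu eta Delta eps S \<longleftrightarrow>
     strict_braided_monoidal C \<and>
     hom C mu (TO C A A) A \<and> hom C eta (Uo C) A \<and> hom C Delta A (TO C A A) \<and>
     hom C eps A (Uo C) \<and> hom C S A A \<and>
     Cmp C mu (TM C mu (Idm C A)) = Cmp C mu (TM C (Idm C A) mu) \<and>
     Cmp C mu (TM C eta (Idm C A)) = Idm C A \<and>
     Cmp C mu (TM C (Idm C A) eta) = Idm C A \<and>
     Cmp C (TM C Delta (Idm C A)) Delta = Cmp C (TM C (Idm C A) Delta) Delta \<and>
     Cmp C (TM C eps (Idm C A)) Delta = Idm C A \<and>
     Cmp C (TM C (Idm C A) eps) Delta = Idm C A \<and>
     Cmp C Delta mu =
       Cmp C (TM C mu mu)
         (Cmp C (TM C (TM C (Idm C A) (Br C A A)) (Idm C A)) (TM C Delta Delta)) \<and>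
     Cmp C Delta eta = TM C eta eta \<and>
     Cmp C eps mu = TM C eps eps \<and>
     Cmp C eps eta = Idm C (Uo C) \<and>
     Cmp C mu (Cmp C (TM C S (Idm C A)) Delta) = Cmp C eta eps \<and>
     Cmp C mu (Cmp C (TM C (Idm C A) S) Delta) = Cmp C eta eps"

definition right_crossed_module ::
  "('o, 'm) bmc \<Rightarrow> 'o \<Rightarrow> 'm \<Rightarrow> 'm \<Rightarrow> 'm \<Rightarrow> 'm \<Rightarrow> 'o \<Rightarrow> 'm \<Rightarrow> 'm \<Rightarrow> bool" where
  "right_crossed_module C A mu eta Delta eps X mr dr \<longleftrightarrow>
     hom C mr (TO C X A) X \<and> hom C dr X (TO C X A) \<and>
     Cmp C mr (TM C mr (Idm C A)) = Cmp C mr (TM C (Idm C X) mu) \<and>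
     Cmp C mr (TM C (Idm C X) eta) = Idm C X \<and>
     Cmp C (TM C dr (Idm C A)) dr = Cmp C (TM C (Idm C X) Delta) dr \<and>
     Cmp C (TM C (Idm C X) eps) dr = Idm C X \<and>
     Cmp C (TM C (Idm C X) mu)
       (Cmp C (TM C (Br C A X) (Idm C A))
         (Cmp C (TM C (Idm C A) (Cmp C dr mr))
           (Cmp C (TM C (Br C X A) (Idm C A)) (TM C (Idm C X) Delta)))) =
     Cmp C (TM C mr mu)
       (Cmp C (TM C (TM C (Idm C X) (Br C A A)) (Idm C A)) (TM C dr Delta))"

definition tensor_action ::
  "('o, 'm) bmc \<Rightarrow> 'o \<Rightarrow> 'm \<Rightarrow> 'o \<Rightarrow> 'm \<Rightarrow> 'o \<Rightarrow> 'm \<Rightarrow> 'm" where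
  "tensor_action C A Delta X mrX Y mrY =
     Cmp C (TM C mrX mrY)
       (Cmp C (TM C (TM C (Idm C X) (Br C Y A)) (Idm C A))
         (TM C (TM C (Idm C X) (Idm C Y)) Delta))"

definition tensor_coaction ::
  "('o, 'm) bmc \<Rightarrow> 'o \<Rightarrow> 'm \<Rightarrow> 'o \<Rightarrow> 'm \<Rightarrow> 'o \<Rightarrow> 'm \<Rightarrow> 'm" where
  "tensor_coaction C A mu X drX Y drY =
     Cmp C (TM C (TM C (Idm C X) (Idm C Y)) mu)
       (Cmp C (TM C (TM C (Idm C X) (Br C A Y)) (Idm C A)) (TM C drX drY))"

definition yd_braid ::
  "('o, 'm) bmc \<Rightarrow> 'o \<Rightarrow> 'o \<Rightarrow> 'm \<Rightarrow> 'o \<Rightarrow> 'm \<Rightarrow> 'm" where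
  "yd_braid C A X mrX Y drY =
     Cmp C (TM C (Idm C Y) mrX)
       (Cmp C (TM C (Br C X Y) (Idm C A)) (TM C (Idm C X) drY))"

definition sigma_map ::
  "('o, 'm) bmc \<Rightarrow> 'm \<Rightarrow> 'o \<Rightarrow> 'm \<Rightarrow> 'm \<Rightarrow> 'm" where
  "sigma_map C S Z mr dr = Cmp C mr (Cmp C (TM C (Idm C Z) S) dr)"

end

theory Submission
  imports Defs
begin

text \<open>Both sides are composites of the structure morphisms of A, X and Y, i.e. string diagrams,
  and the identity is proved by rewriting such diagrams; the rewriting certificates are checked by
  evaluation and transferred to C by a soundness theorem.

  Mathematically, the antipode is braided anti-multiplicative, S \<mu> = \<mu> (S \<otimes> S) \<Psi>, since both
  sides are convolution inverses of \<mu> on the coalgebra A \<otimes> A.  Together with the crossed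
  module condition of X and the identity (A \<otimes> \<mu>) (\<Psi> \<otimes> A) (A \<otimes> \<Delta>) (A \<otimes> S) \<Delta> = S \<otimes> \<eta>,
  this turns \<sigma>_(Y\<otimes>X)/A \<Psi>^YD_X,Y into the action of Y \<otimes> X precomposed with
  (Y \<otimes> X \<otimes> S) (Y \<otimes> \<Delta>_r^X) (\<sigma>_Y/A \<otimes> X) \<Psi>_X,Y.  Composing with \<Psi>^YD_Y,X, the same identity
  makes the two actions on Y cancel, which leaves \<Psi>_Y,X (Y \<otimes> \<sigma>_X/A) (\<sigma>_Y/A \<otimes> X) \<Psi>_X,Y.\<close>

section \<open>Strict braided monoidal categories\<close>

locale strict_bmc =
  fixes C :: "('o, 'm) bmc"
  assumes monoidal: "strict_braided_monoidal C"
begin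

lemma dom_id [simp]: "Dom C (Idm C Z) = Z"
  and cod_id [simp]: "Cod C (Idm C Z) = Z"
  using monoidal unfolding strict_braided_monoidal_def hom_def by auto

lemma dom_comp [simp]: "Cod C f = Dom C g \<Longrightarrow> Dom C (Cmp C g f) = Dom C f"
  and cod_comp [simp]: "Cod C f = Dom C g \<Longrightarrow> Cod C (Cmp C g f) = Cod C g"
  using monoidal unfolding strict_braided_monoidal_def hom_def by auto

lemma comp_id_dom: "Cmp C f (Idm C (Dom C f)) = f"
  and comp_id_cod: "Cmp C (Idm C (Cod C f)) f = f"
  using monoidal unfolding strict_braided_monoidal_def by auto

lemma comp_id_right: "Dom C f = Z \<Longrightarrow> Cmp C f (Idm C Z) = f"
  and comp_id_left: "Cod C f = Z \<Longrightarrow> Cmp C (Idm C Z) f = f"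
  using comp_id_dom comp_id_cod by auto

lemma comp_assoc:
  "Cod C f = Dom C g \<Longrightarrow> Cod C g = Dom C h \<Longrightarrow> Cmp C (Cmp C h g) f = Cmp C h (Cmp C g f)"
  using monoidal unfolding strict_braided_monoidal_def by auto

lemma dom_tensor [simp]: "Dom C (TM C f g) = TO C (Dom C f) (Dom C g)"
  and cod_tensor [simp]: "Cod C (TM C f g) = TO C (Cod C f) (Cod C g)"
  using monoidal unfolding strict_braided_monoidal_def hom_def by auto

lemma tensor_id: "TM C (Idm C Z) (Idm C W) = Idm C (TO C Z W)"
  using monoidal unfolding strict_braided_monoidal_def by auto

lemma interchange:
  "Cod C f = Dom C g \<Longrightarrow> Cod C f' = Dom C g' \<Longrightarrow>
     TM C (Cmp C g f) (Cmp C g' f') = Cmp C (TM C g g') (TM C f f')"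
  using monoidal unfolding strict_braided_monoidal_def by auto

lemma tensor_obj_assoc [simp]: "TO C (TO C Z W) V = TO C Z (TO C W V)"
  and tensor_obj_unit [simp]: "TO C (Uo C) Z = Z" "TO C Z (Uo C) = Z"
  and tensor_assoc [simp]: "TM C (TM C f g) h = TM C f (TM C g h)"
  and tensor_unit [simp]: "TM C (Idm C (Uo C)) f = f" "TM C f (Idm C (Uo C)) = f"
  using monoidal unfolding strict_braided_monoidal_def by auto

lemma dom_braid [simp]: "Dom C (Br C Z W) = TO C Z W"
  and cod_braid [simp]: "Cod C (Br C Z W) = TO C W Z"
  using monoidal unfolding strict_braided_monoidal_def hom_def by auto

lemma braid_invertible:
  "\<exists>g. hom C g (TO C W Z) (TO C Z W) \<and>
     Cmp C g (Br C Z W) = Idm C (TO C Z W) \<and> Cmp C (Br C Z W) g = Idm C (TO C W Z)"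
  using monoidal unfolding strict_braided_monoidal_def by auto

lemma braid_natural:
  "Cmp C (Br C (Cod C f) (Cod C g)) (TM C f g) = Cmp C (TM C g f) (Br C (Dom C f) (Dom C g))"
  using monoidal unfolding strict_braided_monoidal_def by auto

lemma braid_tensor_right:
  "Br C Z (TO C W V) = Cmp C (TM C (Idm C W) (Br C Z V)) (TM C (Br C Z W) (Idm C V))"
  and braid_tensor_left:
  "Br C (TO C Z W) V = Cmp C (TM C (Br C Z V) (Idm C W)) (TM C (Idm C Z) (Br C W V))"
  using monoidal unfolding strict_braided_monoidal_def by auto

lemma idempotent_braid_eq_id:
  assumes idem: "Cmp C (Br C Z W) (Br C Z W) = Br C Z W" and sym: "TO C W Z = TO C Z W"
  shows "Br C Z W = Idm C (TO C Z W)"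
proof -
  obtain g where g: "hom C g (TO C W Z) (TO C Z W)" "Cmp C g (Br C Z W) = Idm C (TO C Z W)"
    using braid_invertible by blast
  have "Idm C (TO C Z W) = Cmp C g (Cmp C (Br C Z W) (Br C Z W))"
    using idem g by simp
  also have "\<dots> = Br C Z W"
    using g sym by (simp add: hom_def comp_assoc[symmetric] comp_id_left)
  finally show ?thesis by simp
qed

lemma braid_unit_left: "Br C (Uo C) Z = Idm C Z"
  using idempotent_braid_eq_id[of "Uo C" Z] braid_tensor_left[of "Uo C" "Uo C" Z] by simp

lemma braid_unit_right: "Br C Z (Uo C) = Idm C Z"
  using idempotent_braid_eq_id[of Z "Uo C"] braid_tensor_right[of Z "Uo C" "Uo C"] by simp

lemma tensor_split_left: "TM C f g = Cmp C (TM C (Idm C (Cod C f)) g) (TM C f (Idm C (Dom C g)))"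
  using interchange[of f "Idm C (Cod C f)" "Idm C (Dom C g)" g] by (simp add: comp_id_dom comp_id_cod)

lemma tensor_split_right: "TM C f g = Cmp C (TM C f (Idm C (Cod C g))) (TM C (Idm C (Dom C f)) g)"
  using interchange[of "Idm C (Dom C f)" f g "Idm C (Cod C g)"] by (simp add: comp_id_dom comp_id_cod)

lemma tensor_id_comp:
  "Cod C f = Dom C g \<Longrightarrow> TM C (Idm C Z) (Cmp C g f) = Cmp C (TM C (Idm C Z) g) (TM C (Idm C Z) f)"
  using interchange[of "Idm C Z" "Idm C Z" f g] by (simp add: comp_id_left)

lemma comp_tensor_id:
  "Cod C f = Dom C g \<Longrightarrow> TM C (Cmp C g f) (Idm C Z) = Cmp C (TM C g (Idm C Z)) (TM C f (Idm C Z))"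
  using interchange[of f g "Idm C Z" "Idm C Z"] by (simp add: comp_id_left)

lemma tensor_id_id: "TM C (Idm C Z) (TM C (Idm C W) f) = TM C (Idm C (TO C Z W)) f"
  by (simp add: tensor_id[symmetric])

lemmas comp_normalize = comp_assoc comp_id_left comp_id_right tensor_id tensor_id_id

end

section \<open>String diagrams\<close>

datatype yd_module = MX | MY

datatype wire = WA | WM yd_module

abbreviation WX :: wire where "WX \<equiv> WM MX"
abbreviation WY :: wire where "WY \<equiv> WM MY"

datatype box =
  Mult | Unit | Comult | Counit | Antipode | Action yd_module | Coaction yd_module | Braid wire wire

fun box_dom :: "box \<Rightarrow> wire list" where
  "box_dom Mult = [WA, WA]"
| "box_dom Unit = []"
| "box_dom Comult = [WA]"
| "box_dom Counit = [WA]"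
| "box_dom Antipode = [WA]"
| "box_dom (Action z) = [WM z, WA]"
| "box_dom (Coaction z) = [WM z]"
| "box_dom (Braid a b) = [a, b]"

fun box_cod :: "box \<Rightarrow> wire list" where
  "box_cod Mult = [WA]"
| "box_cod Unit = [WA]"
| "box_cod Comult = [WA, WA]"
| "box_cod Counit = []"
| "box_cod Antipode = [WA]"
| "box_cod (Action z) = [WM z]"
| "box_cod (Coaction z) = [WM z, WA]"
| "box_cod (Braid a b) = [b, a]"

text \<open>A layer \<open>(p, b, q)\<close> is the box \<open>b\<close> with the identity wires \<open>p\<close> on its left and \<open>q\<close>
  on its right.  A string diagram is a list of layers, the first one applied first.\<close>

type_synonym layer = "wire list \<times> box \<times> wire list"

fun layer_dom :: "layer \<Rightarrow> wire list" where
  "layer_dom (p, b, q) = p @ box_dom b @ q"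

fun layer_cod :: "layer \<Rightarrow> wire list" where
  "layer_cod (p, b, q) = p @ box_cod b @ q"

fun composable :: "wire list \<Rightarrow> layer list \<Rightarrow> bool" where
  "composable w [] = True"
| "composable w (l # D) = (layer_dom l = w \<and> composable (layer_cod l) D)"

fun diagram_cod :: "wire list \<Rightarrow> layer list \<Rightarrow> wire list" where
  "diagram_cod w [] = w"
| "diagram_cod w (l # D) = diagram_cod (layer_cod l) D"

fun whisker :: "wire list \<Rightarrow> wire list \<Rightarrow> layer \<Rightarrow> layer" where
  "whisker p q (a, b, c) = (p @ a, b, c @ q)"

fun braid_word_wire :: "wire list \<Rightarrow> wire \<Rightarrow> layer list" where
  "braid_word_wire [] b = []"
| "braid_word_wire (u # U) b = map (whisker [u] []) (braid_word_wire U b) @ [([], Braid u b, U)]"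

fun braid_wire_word :: "wire \<Rightarrow> wire list \<Rightarrow> layer list" where
  "braid_wire_word b [] = []"
| "braid_wire_word b (u # U) = ([], Braid b u, U) # map (whisker [u] []) (braid_wire_word b U)"

text \<open>Interchange law: consecutive layers whose boxes sit on disjoint wires commute.\<close>

fun swap_layers :: "layer \<Rightarrow> layer \<Rightarrow> (layer \<times> layer) option" where
  "swap_layers (p1, f, q1) (p2, g, q2) =
    (if length p1 + length (box_cod f) \<le> length p2 then
       Some ((p1 @ box_dom f @ drop (length p1 + length (box_cod f)) p2, g, q2),
             (p1, f, drop (length p1 + length (box_cod f)) p2 @ box_cod g @ q2))
     else if length p2 + length (box_dom g) \<le> length p1 then
       Some ((p2, g, drop (length p2 + length (box_dom g)) p1 @ box_dom f @ q1),
             (p2 @ box_cod g @ drop (length p2 + length (box_dom g)) p1, f, q1))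
     else None)"

lemma append_eq_append_shorter:
  assumes "xs @ ys = us @ vs" and "length xs \<le> length us"
  obtains m where "us = xs @ m" and "ys = m @ vs"
  using assms by (metis append_eq_append_conv_if append_take_drop_id)

lemma composable_append [simp]:
  "composable w (D1 @ D2) = (composable w D1 \<and> composable (diagram_cod w D1) D2)"
  by (induction D1 arbitrary: w) auto

lemma diagram_cod_append [simp]: "diagram_cod w (D1 @ D2) = diagram_cod (diagram_cod w D1) D2"
  by (induction D1 arbitrary: w) auto

lemma layer_dom_whisker [simp]: "layer_dom (whisker p q l) = p @ layer_dom l @ q"
  and layer_cod_whisker [simp]: "layer_cod (whisker p q l) = p @ layer_cod l @ q"
  by (cases l; simp)+

lemma composable_whisker:
  "composable w D \<Longrightarrow>
     composable (p @ w @ q) (map (whisker p q) D) \<and>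
     diagram_cod (p @ w @ q) (map (whisker p q) D) = p @ diagram_cod w D @ q"
  by (induction D arbitrary: w) auto

section \<open>Rewriting certificates\<close>

datatype rule =
  Mult_assoc | Unit_left | Unit_right | Comult_coassoc | Counit_left | Counit_right | Bialgebra
| Comult_unit | Counit_mult | Counit_unit | Antipode_left | Antipode_right
| Action_assoc yd_module | Action_unit yd_module | Coaction_coassoc yd_module
| Coaction_counit yd_module | Crossed yd_module
| Braid_natural_right box wire | Braid_natural_left box wire
| Antipode_braid_cancel | Tensor_counit_right | Tensor_counit_left | Tensor_coassoc
| Mult_conv_braided_antipode | Antipode_mult_conv_mult | Antipode_antimultiplicative
| Tensor_action_assoc | Yd_braid_tensor_action | Sigma_tensor_yd_braid

type_synonym diagram_eq = "wire list \<times> layer list \<times> layer list"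

text \<open>The equations from \<open>Antipode_braid_cancel\<close> on are derived ones.  In formulas, with
  \<delta> = (A \<otimes> \<Psi> \<otimes> A) (\<Delta> \<otimes> \<Delta>) the comultiplication of A \<otimes> A and act the action of Y \<otimes> X:
  \<^item> \<open>Antipode_braid_cancel\<close>: (A \<otimes> \<mu>) (\<Psi> \<otimes> A) (A \<otimes> \<Delta>) (A \<otimes> S) \<Delta> = S \<otimes> \<eta>;
  \<^item> \<open>Mult_conv_braided_antipode\<close>: \<mu> (\<mu> \<otimes> \<mu> (S \<otimes> S) \<Psi>) \<delta> = \<eta> (\<epsilon> \<otimes> \<epsilon>);
  \<^item> \<open>Antipode_mult_conv_mult\<close>: \<mu> (S \<mu> \<otimes> \<mu>) \<delta> = \<eta> (\<epsilon> \<otimes> \<epsilon>);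
  \<^item> \<open>Sigma_tensor_yd_braid\<close>:
    \<sigma>_(Y\<otimes>X)/A \<Psi>^YD_X,Y = act (Y \<otimes> X \<otimes> S) (Y \<otimes> \<Delta>_r^X) (\<sigma>_Y/A \<otimes> X) \<Psi>_X,Y;
  \<^item> \<open>Yd_braid_tensor_action\<close>: \<Psi>^YD_Y,X act (Y \<otimes> X \<otimes> S) (Y \<otimes> \<Delta>_r^X) = \<Psi>_Y,X (Y \<otimes> \<sigma>_X/A).\<close>

fun equation :: "rule \<Rightarrow> diagram_eq" where
  "equation (Braid_natural_right g b) =
     (box_dom g @ [b], ([], g, [b]) # braid_word_wire (box_cod g) b,
      braid_word_wire (box_dom g) b @ [([b], g, [])])"
| "equation (Braid_natural_left g b) =
     (b # box_dom g, ([b], g, []) # braid_wire_word b (box_cod g),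
      braid_wire_word b (box_dom g) @ [([], g, [b])])"
| "equation (Action_assoc z) =
     ([WM z,WA,WA], [([],Action z,[WA]), ([],Action z,[])], [([WM z],Mult,[]), ([],Action z,[])])"
| "equation (Action_unit z) = ([WM z], [([WM z],Unit,[]), ([],Action z,[])], [])"
| "equation (Coaction_coassoc z) =
     ([WM z], [([],Coaction z,[]), ([],Coaction z,[WA])], [([],Coaction z,[]), ([WM z],Comult,[])])"
| "equation (Coaction_counit z) = ([WM z], [([],Coaction z,[]), ([WM z],Counit,[])], [])"
| "equation (Crossed z) =
     ([WM z,WA], [([WM z],Comult,[]), ([],Braid (WM z) WA,[WA]), ([WA],Action z,[]),
        ([WA],Coaction z,[]), ([],Braid WA (WM z),[WA]), ([WM z],Mult,[])],
      [([],Coaction z,[WA]), ([WM z,WA],Comult,[]), ([WM z],Braid WA WA,[WA]),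
        ([],Action z,[WA,WA]), ([WM z],Mult,[])])"
| "equation Mult_assoc =
     ([WA,WA,WA],
      [([],Mult,[WA]), ([],Mult,[])],
      [([WA],Mult,[]), ([],Mult,[])])"
| "equation Unit_left = ([WA], [([],Unit,[WA]), ([],Mult,[])], [])"
| "equation Unit_right = ([WA], [([WA],Unit,[]), ([],Mult,[])], [])"
| "equation Comult_coassoc =
     ([WA],
      [([],Comult,[]), ([],Comult,[WA])],
      [([],Comult,[]), ([WA],Comult,[])])"
| "equation Counit_left = ([WA], [([],Comult,[]), ([],Counit,[WA])], [])"
| "equation Counit_right = ([WA], [([],Comult,[]), ([WA],Counit,[])], [])"
| "equation Bialgebra =
     ([WA,WA],
      [([],Mult,[]), ([],Comult,[])],
      [([],Comult,[WA]), ([WA,WA],Comult,[]), ([WA],Braid WA WA,[WA]), ([],Mult,[WA,WA]),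
        ([WA],Mult,[])])"
| "equation Comult_unit = ([], [([],Unit,[]), ([],Comult,[])], [([],Unit,[]), ([WA],Unit,[])])"
| "equation Counit_mult =
     ([WA,WA],
      [([],Mult,[]), ([],Counit,[])],
      [([WA],Counit,[]), ([],Counit,[])])"
| "equation Counit_unit = ([], [([],Unit,[]), ([],Counit,[])], [])"
| "equation Antipode_left =
     ([WA],
      [([],Comult,[]), ([],Antipode,[WA]), ([],Mult,[])],
      [([],Counit,[]), ([],Unit,[])])"
| "equation Antipode_right =
     ([WA],
      [([],Comult,[]), ([WA],Antipode,[]), ([],Mult,[])],
      [([],Counit,[]), ([],Unit,[])])"
| "equation Antipode_braid_cancel =
     ([WA],
      [([],Comult,[]), ([WA],Antipode,[]), ([WA],Comult,[]), ([],Braid WA WA,[WA]),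
        ([WA],Mult,[])],
      [([],Antipode,[]), ([WA],Unit,[])])"
| "equation Tensor_counit_right =
     ([WA,WA],
      [([],Comult,[WA]), ([WA,WA],Comult,[]), ([WA],Braid WA WA,[WA]), ([WA,WA,WA],Counit,[]),
        ([WA,WA],Counit,[])],
      [])"
| "equation Tensor_counit_left =
     ([WA,WA],
      [([],Comult,[WA]), ([WA,WA],Comult,[]), ([WA],Braid WA WA,[WA]), ([WA],Counit,[WA,WA]),
        ([],Counit,[WA,WA])],
      [])"
| "equation Tensor_coassoc =
     ([WA,WA],
      [([],Comult,[WA]), ([WA,WA],Comult,[]), ([WA],Braid WA WA,[WA]), ([],Comult,[WA,WA,WA]),
        ([WA,WA],Comult,[WA,WA]), ([WA],Braid WA WA,[WA,WA,WA])],
      [([],Comult,[WA]), ([WA,WA],Comult,[]), ([WA],Braid WA WA,[WA]), ([WA,WA],Comult,[WA]),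
        ([WA,WA,WA,WA],Comult,[]), ([WA,WA,WA],Braid WA WA,[WA])])"
| "equation Mult_conv_braided_antipode =
     ([WA,WA],
      [([],Comult,[WA]), ([WA,WA],Comult,[]), ([WA],Braid WA WA,[WA]), ([],Mult,[WA,WA]),
        ([WA],Braid WA WA,[]), ([WA],Antipode,[WA]), ([WA,WA],Antipode,[]), ([WA],Mult,[]),
        ([],Mult,[])],
      [([WA],Counit,[]), ([],Counit,[]), ([],Unit,[])])"
| "equation Antipode_mult_conv_mult =
     ([WA,WA],
      [([],Comult,[WA]), ([WA,WA],Comult,[]), ([WA],Braid WA WA,[WA]), ([],Mult,[WA,WA]),
        ([],Antipode,[WA,WA]), ([WA],Mult,[]), ([],Mult,[])],
      [([WA],Counit,[]), ([],Counit,[]), ([],Unit,[])])"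
| "equation Antipode_antimultiplicative =
     ([WA,WA],
      [([],Mult,[]), ([],Antipode,[])],
      [([],Braid WA WA,[]), ([],Antipode,[WA]), ([WA],Antipode,[]), ([],Mult,[])])"
| "equation Tensor_action_assoc =
     ([WY,WX,WA,WA],
      [([WY,WX],Mult,[]), ([WY,WX],Comult,[]), ([WY],Braid WX WA,[WA]), ([],Action MY,[WX,WA]),
        ([WY],Action MX,[])],
      [([WY,WX],Comult,[WA]), ([WY],Braid WX WA,[WA,WA]), ([],Action MY,[WX,WA,WA]),
        ([WY],Action MX,[WA]), ([WY,WX],Comult,[]), ([WY],Braid WX WA,[WA]),
        ([],Action MY,[WX,WA]), ([WY],Action MX,[])])"
| "equation Yd_braid_tensor_action =
     ([WY,WX],
      [([WY],Coaction MX,[]), ([WY,WX],Antipode,[]), ([WY,WX],Comult,[]),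
        ([WY],Braid WX WA,[WA]), ([],Action MY,[WX,WA]), ([WY],Action MX,[]),
        ([WY],Coaction MX,[]), ([],Braid WY WX,[WA]), ([WX],Action MY,[])],
      [([WY],Coaction MX,[]), ([WY,WX],Antipode,[]), ([WY],Action MX,[]), ([],Braid WY WX,[])])"
| "equation Sigma_tensor_yd_braid =
     ([WX,WY],
      [([WX],Coaction MY,[]), ([],Braid WX WY,[WA]), ([WY],Action MX,[]),
        ([],Coaction MY,[WX]), ([WY,WA],Coaction MX,[]), ([WY],Braid WA WX,[WA]),
        ([WY,WX],Mult,[]), ([WY,WX],Antipode,[]), ([WY,WX],Comult,[]), ([WY],Braid WX WA,[WA]),
        ([],Action MY,[WX,WA]), ([WY],Action MX,[])],
      [([],Braid WX WY,[]), ([],Coaction MY,[WX]), ([WY],Antipode,[WX]), ([],Action MY,[WX]),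
        ([WY],Coaction MX,[]), ([WY,WX],Antipode,[]), ([WY,WX],Comult,[]),
        ([WY],Braid WX WA,[WA]), ([],Action MY,[WX,WA]), ([WY],Action MX,[])])"

text \<open>\<open>Swap i\<close> interchanges layers \<open>i\<close> and \<open>i + 1\<close>; \<open>Rewrite n i k d\<close> replaces, starting at
  layer \<open>i\<close> and shifted by \<open>k\<close> wires to the right, the left-hand side of equation \<open>n\<close> by its
  right-hand side if \<open>d\<close>, and the right-hand side by the left-hand side otherwise.\<close>

datatype step = Swap nat | Rewrite rule nat nat bool

fun apply_step :: "wire list \<Rightarrow> step \<Rightarrow> layer list \<Rightarrow> layer list option" where
  "apply_step w (Swap i) D =
    (case drop i D of
       l1 # l2 # R \<Rightarrow>
         (case swap_layers l1 l2 of
            Some (a, b) \<Rightarrow> Some (take i D @ a # b # R)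
          | None \<Rightarrow> None)
     | _ \<Rightarrow> None)"
| "apply_step w (Rewrite n i k d) D =
    (case equation n of (u, l, r) \<Rightarrow>
      (let src = (if d then l else r); tgt = (if d then r else l); v = diagram_cod w (take i D);
           p = take k v; q = drop (k + length u) v in
       if v = p @ u @ q \<and> take (length src) (drop i D) = map (whisker p q) src
       then Some (take i D @ map (whisker p q) tgt @ drop (i + length src) D) else None))"

fun apply_steps :: "wire list \<Rightarrow> step list \<Rightarrow> layer list \<Rightarrow> layer list option" where
  "apply_steps w [] D = Some D"
| "apply_steps w (s # ss) D = (case apply_step w s D of None \<Rightarrow> None | Some D' \<Rightarrow> apply_steps w ss D')"

fun rules_used :: "step list \<Rightarrow> rule list" where
  "rules_used [] = []"
| "rules_used (Swap i # ss) = rules_used ss"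
| "rules_used (Rewrite n i k d # ss) = n # rules_used ss"

locale yd_pair =
  fixes C :: "('o, 'm) bmc"
    and A X Y :: 'o
    and mu eta Delta eps S mrX drX mrY drY :: 'm
  assumes braided_group: "braided_group C A mu eta Delta eps S"
    and crossed_X: "right_crossed_module C A mu eta Delta eps X mrX drX"
    and crossed_Y: "right_crossed_module C A mu eta Delta eps Y mrY drY"

sublocale yd_pair \<subseteq> strict_bmc C
  using braided_group by unfold_locales (simp add: braided_group_def)

context yd_pair
begin

lemma hopf_hom [simp]:
  "Dom C mu = TO C A A" "Cod C mu = A" "Dom C eta = Uo C" "Cod C eta = A"
  "Dom C Delta = A" "Cod C Delta = TO C A A" "Dom C eps = A" "Cod C eps = Uo C"
  "Dom C S = A" "Cod C S = A"
  using braided_group unfolding braided_group_def hom_def by auto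

lemma module_hom [simp]:
  "Dom C mrX = TO C X A" "Cod C mrX = X" "Dom C drX = X" "Cod C drX = TO C X A"
  "Dom C mrY = TO C Y A" "Cod C mrY = Y" "Dom C drY = Y" "Cod C drY = TO C Y A"
  using crossed_X crossed_Y unfolding right_crossed_module_def hom_def by auto

fun wire_obj :: "wire \<Rightarrow> 'o" where
  "wire_obj WA = A"
| "wire_obj WX = X"
| "wire_obj WY = Y"

fun word_obj :: "wire list \<Rightarrow> 'o" where
  "word_obj [] = Uo C"
| "word_obj (a # w) = TO C (wire_obj a) (word_obj w)"

fun box_mor :: "box \<Rightarrow> 'm" where
  "box_mor Mult = mu"
| "box_mor Unit = eta"
| "box_mor Comult = Delta"
| "box_mor Counit = eps"
| "box_mor Antipode = S"
| "box_mor (Action MX) = mrX"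
| "box_mor (Action MY) = mrY"
| "box_mor (Coaction MX) = drX"
| "box_mor (Coaction MY) = drY"
| "box_mor (Braid a b) = Br C (wire_obj a) (wire_obj b)"

fun layer_mor :: "layer \<Rightarrow> 'm" where
  "layer_mor (p, b, q) = TM C (Idm C (word_obj p)) (TM C (box_mor b) (Idm C (word_obj q)))"

fun diagram_mor :: "wire list \<Rightarrow> layer list \<Rightarrow> 'm" where
  "diagram_mor w [] = Idm C (word_obj w)"
| "diagram_mor w (l # D) = Cmp C (diagram_mor (layer_cod l) D) (layer_mor l)"

definition sound :: "diagram_eq \<Rightarrow> bool" where
  "sound e \<longleftrightarrow> (case e of (u, l, r) \<Rightarrow>
     composable u l \<and> composable u r \<and> diagram_cod u l = diagram_cod u r \<and>
     diagram_mor u l = diagram_mor u r)"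

lemma word_obj_append [simp]: "word_obj (v @ w) = TO C (word_obj v) (word_obj w)"
  by (induction v) auto

lemma dom_box_mor [simp]: "Dom C (box_mor b) = word_obj (box_dom b)"
  and cod_box_mor [simp]: "Cod C (box_mor b) = word_obj (box_cod b)"
  by (cases b rule: box_mor.cases; simp)+

lemma dom_layer_mor [simp]: "Dom C (layer_mor l) = word_obj (layer_dom l)"
  and cod_layer_mor [simp]: "Cod C (layer_mor l) = word_obj (layer_cod l)"
  by (cases l; simp)+

lemma diagram_mor_hom:
  "composable w D \<Longrightarrow>
     Dom C (diagram_mor w D) = word_obj w \<and> Cod C (diagram_mor w D) = word_obj (diagram_cod w D)"
  by (induction D arbitrary: w) auto

lemma diagram_mor_append:
  "composable w (D1 @ D2) \<Longrightarrow>
     diagram_mor w (D1 @ D2) = Cmp C (diagram_mor (diagram_cod w D1) D2) (diagram_mor w D1)"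
proof (induction D1 arbitrary: w)
  case Nil
  then show ?case using diagram_mor_hom[of w D2] by (simp add: comp_id_right)
next
  case (Cons l D1)
  then have "composable (layer_cod l) (D1 @ D2)" by simp
  with Cons.IH show ?case
    using diagram_mor_hom[of "layer_cod l" D1] diagram_mor_hom[of "diagram_cod (layer_cod l) D1" D2]
    by (simp add: comp_assoc)
qed

lemma layer_mor_whisker:
  "layer_mor (whisker p q l) = TM C (Idm C (word_obj p)) (TM C (layer_mor l) (Idm C (word_obj q)))"
  by (cases l) (simp add: tensor_id[symmetric])

lemma diagram_mor_whisker:
  "composable w D \<Longrightarrow>
     diagram_mor (p @ w @ q) (map (whisker p q) D) =
       TM C (Idm C (word_obj p)) (TM C (diagram_mor w D) (Idm C (word_obj q)))"
proof (induction D arbitrary: w)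
  case Nil
  then show ?case by (simp add: tensor_id[symmetric])
next
  case (Cons l D)
  then have "composable (layer_cod l) D" and "layer_dom l = w" by auto
  with Cons.IH show ?case
    using diagram_mor_hom[of "layer_cod l" D]
    by (simp add: layer_mor_whisker interchange[symmetric] comp_id_left)
qed

section \<open>Soundness of rewriting\<close>

lemma sound_swap: "sound (u, l, r) \<Longrightarrow> sound (u, r, l)"
  unfolding sound_def by auto

lemma sound_trans: "sound (u, l, m) \<Longrightarrow> sound (u, m, r) \<Longrightarrow> sound (u, l, r)"
  unfolding sound_def by auto

lemma sound_refl: "composable u l \<Longrightarrow> sound (u, l, l)"
  unfolding sound_def by auto

lemma sound_whisker:
  "sound (u, l, r) \<Longrightarrow> sound (p @ u @ q, map (whisker p q) l, map (whisker p q) r)"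
  unfolding sound_def by (auto simp: composable_whisker diagram_mor_whisker)

lemma sound_replace:
  assumes comp: "composable w (L @ M @ R)" and sound: "sound (diagram_cod w L, M, M')"
  shows "sound (w, L @ M @ R, L @ M' @ R)"
proof -
  let ?v = "diagram_cod w L"
  have split: "diagram_mor w (L @ N @ R) =
      Cmp C (Cmp C (diagram_mor (diagram_cod ?v N) R) (diagram_mor ?v N)) (diagram_mor w L)"
    if "composable w (L @ N @ R)" for N
    using that by (simp add: diagram_mor_append[of w L] diagram_mor_append[of ?v N R])
  have "composable w (L @ M' @ R)"
    using comp sound unfolding sound_def by simp
  with comp sound show ?thesis
    unfolding sound_def by (simp add: split)
qed

lemma swap_layers_sound:
  assumes swap: "swap_layers l1 l2 = Some (a, b)" and comp: "composable v [l1, l2]"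
  shows "sound (v, [l1, l2], [a, b])"
proof -
  obtain p1 f q1 p2 g q2 where l: "l1 = (p1, f, q1)" "l2 = (p2, g, q2)"
    by (cases l1, cases l2)
  have v: "v = p1 @ box_dom f @ q1" and mid: "(p1 @ box_cod f) @ q1 = p2 @ box_dom g @ q2"
    using comp l by auto
  consider (left) "length p1 + length (box_cod f) \<le> length p2"
    | (right) "\<not> length p1 + length (box_cod f) \<le> length p2"
        "length p2 + length (box_dom g) \<le> length p1"
    using swap l by (auto split: if_splits)
  then show ?thesis
  proof cases
    case left
    then obtain m where m: "p2 = p1 @ box_cod f @ m" "q1 = m @ box_dom g @ q2"
      using append_eq_append_shorter[OF mid] by auto
    then have "a = (p1 @ box_dom f @ m, g, q2)" "b = (p1, f, m @ box_cod g @ q2)"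
      using swap l left by auto
    then show ?thesis
      using l m v unfolding sound_def
      by (simp add: tensor_id[symmetric] interchange[symmetric] comp_id_left comp_id_right)
  next
    case right
    from mid have "(p2 @ box_dom g) @ q2 = p1 @ box_cod f @ q1" by simp
    then obtain m where m: "p1 = p2 @ box_dom g @ m" "q2 = m @ box_cod f @ q1"
      using append_eq_append_shorter right(2) by (metis append.assoc length_append)
    then have "a = (p2, g, m @ box_dom f @ q1)" "b = (p2 @ box_cod g @ m, f, q1)"
      using swap l right by auto
    then show ?thesis
      using l m v unfolding sound_def
      by (simp add: tensor_id[symmetric] interchange[symmetric] comp_id_left comp_id_right)
  qed
qed

lemma apply_step_sound:
  assumes comp: "composable w D" and step: "apply_step w s D = Some D'"
    and rules: "\<forall>n\<in>set (rules_used [s]). sound (equation n)"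
  shows "sound (w, D, D')"
proof (cases s)
  case (Swap i)
  then obtain l1 l2 R where drop: "drop i D = l1 # l2 # R"
    using step by (auto split: list.splits)
  then obtain a b where swap: "swap_layers l1 l2 = Some (a, b)" and D': "D' = take i D @ [a, b] @ R"
    using step Swap by (auto split: option.splits)
  have D: "D = take i D @ [l1, l2] @ R"
    using drop by (metis append_Cons append_Nil append_take_drop_id)
  then have "composable (diagram_cod w (take i D)) [l1, l2]"
    using comp by (metis composable_append)
  then show ?thesis
    using sound_replace[OF _ swap_layers_sound[OF swap]] comp D D' by metis
next
  case (Rewrite n i k d)
  obtain u l r where eq: "equation n = (u, l, r)" by (cases "equation n")
  define src where "src = (if d then l else r)"
  define tgt where "tgt = (if d then r else l)"
  define v where "v = diagram_cod w (take i D)"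
  define p where "p = take k v"
  define q where "q = drop (k + length u) v"
  have "apply_step w s D =
     (if v = p @ u @ q \<and> take (length src) (drop i D) = map (whisker p q) src
      then Some (take i D @ map (whisker p q) tgt @ drop (i + length src) D) else None)"
    using Rewrite eq by (simp add: src_def tgt_def v_def p_def q_def Let_def)
  then have v: "v = p @ u @ q" and match: "take (length src) (drop i D) = map (whisker p q) src"
    and D': "D' = take i D @ map (whisker p q) tgt @ drop (i + length src) D"
    using step by (auto split: if_splits)
  have D: "D = take i D @ map (whisker p q) src @ drop (i + length src) D"
    using match by (metis append_take_drop_id drop_drop add.commute)
  have "sound (u, src, tgt)"
    using rules Rewrite eq sound_swap unfolding src_def tgt_def by auto
  then have "sound (v, map (whisker p q) src, map (whisker p q) tgt)"
    using v sound_whisker by simp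
  then show ?thesis
    using sound_replace[of w "take i D"] comp D D' unfolding v_def by metis
qed

lemma apply_steps_sound:
  assumes "composable w D" and "apply_steps w ss D = Some D'"
    and "\<forall>n\<in>set (rules_used ss). sound (equation n)"
  shows "sound (w, D, D')"
  using assms
proof (induction ss arbitrary: D)
  case Nil
  then show ?case by (simp add: sound_refl)
next
  case (Cons s ss)
  then obtain D1 where step: "apply_step w s D = Some D1" and steps: "apply_steps w ss D1 = Some D'"
    by (auto split: option.splits)
  have rules: "\<forall>n\<in>set (rules_used [s]). sound (equation n)"
    "\<forall>n\<in>set (rules_used ss). sound (equation n)"
    using Cons.prems(3) by (cases s; simp)+
  have first: "sound (w, D, D1)"
    using apply_step_sound[OF Cons.prems(1) step rules(1)] .
  then have "composable w D1"
    unfolding sound_def by simp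
  with first show ?case
    using Cons.IH[OF _ steps rules(2)] sound_trans by blast
qed

lemma sound_hopf_axioms [simp]:
  "sound (equation Mult_assoc)" "sound (equation Unit_left)" "sound (equation Unit_right)"
  "sound (equation Comult_coassoc)" "sound (equation Counit_left)" "sound (equation Counit_right)"
  "sound (equation Bialgebra)" "sound (equation Comult_unit)" "sound (equation Counit_mult)"
  "sound (equation Counit_unit)" "sound (equation Antipode_left)" "sound (equation Antipode_right)"
proof -
  note axioms = braided_group[unfolded braided_group_def]
  have bialgebra: "Cmp C Delta mu =
      Cmp C (Cmp C (TM C (Idm C A) mu) (TM C mu (Idm C (TO C A A))))
        (Cmp C (TM C (TM C (Idm C A) (Br C A A)) (Idm C A))
          (Cmp C (TM C (Idm C (TO C A A)) Delta) (TM C Delta (Idm C A))))"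
    using axioms tensor_split_left[of mu mu] tensor_split_left[of Delta Delta] by simp
  have comult_unit: "Cmp C Delta eta = Cmp C (TM C (Idm C A) eta) eta"
    using axioms tensor_split_left[of eta eta] by simp
  have counit_mult: "Cmp C eps mu = Cmp C eps (TM C (Idm C A) eps)"
    using axioms tensor_split_right[of eps eps] by simp
  show "sound (equation Mult_assoc)" "sound (equation Unit_left)" "sound (equation Unit_right)"
    "sound (equation Comult_coassoc)" "sound (equation Counit_left)" "sound (equation Counit_right)"
    "sound (equation Counit_unit)" "sound (equation Antipode_left)" "sound (equation Antipode_right)"
    using axioms unfolding sound_def by (simp_all add: comp_normalize)
  show "sound (equation Bialgebra)" "sound (equation Comult_unit)" "sound (equation Counit_mult)"
    using bialgebra comult_unit counit_mult unfolding sound_def by (simp_all add: comp_normalize)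
qed

lemma right_crossed_module_wire:
  "right_crossed_module C A mu eta Delta eps (wire_obj (WM z)) (box_mor (Action z)) (box_mor (Coaction z))"
  using crossed_X crossed_Y by (cases z) auto

lemma sound_crossed_module_axioms [simp]:
  "sound (equation (Action_assoc z))" "sound (equation (Action_unit z))"
  "sound (equation (Coaction_coassoc z))" "sound (equation (Coaction_counit z))"
  "sound (equation (Crossed z))"
proof -
  define Z mr dr where "Z = wire_obj (WM z)" and "mr = box_mor (Action z)" and "dr = box_mor (Coaction z)"
  have axioms: "Cmp C mr (TM C mr (Idm C A)) = Cmp C mr (TM C (Idm C Z) mu)"
    "Cmp C mr (TM C (Idm C Z) eta) = Idm C Z"
    "Cmp C (TM C dr (Idm C A)) dr = Cmp C (TM C (Idm C Z) Delta) dr"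
    "Cmp C (TM C (Idm C Z) eps) dr = Idm C Z"
    and crossed: "Cmp C (TM C (Idm C Z) mu)
       (Cmp C (TM C (Br C A Z) (Idm C A))
         (Cmp C (TM C (Idm C A) (Cmp C dr mr))
           (Cmp C (TM C (Br C Z A) (Idm C A)) (TM C (Idm C Z) Delta)))) =
     Cmp C (TM C mr mu) (Cmp C (TM C (TM C (Idm C Z) (Br C A A)) (Idm C A)) (TM C dr Delta))"
    and hom: "Dom C mr = TO C Z A" "Cod C mr = Z" "Dom C dr = Z" "Cod C dr = TO C Z A"
    using right_crossed_module_wire[of z] unfolding right_crossed_module_def hom_def Z_def mr_def dr_def
    by auto
  have crossed_layers: "Cmp C (TM C (Idm C Z) mu)
       (Cmp C (TM C (Br C A Z) (Idm C A))
         (Cmp C (Cmp C (TM C (Idm C A) dr) (TM C (Idm C A) mr))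
           (Cmp C (TM C (Br C Z A) (Idm C A)) (TM C (Idm C Z) Delta)))) =
     Cmp C (Cmp C (TM C (Idm C Z) mu) (TM C mr (Idm C (TO C A A))))
       (Cmp C (TM C (TM C (Idm C Z) (Br C A A)) (Idm C A))
          (Cmp C (TM C (Idm C (TO C Z A)) Delta) (TM C dr (Idm C A))))"
    using crossed hom tensor_split_left[of mr mu] tensor_split_left[of dr Delta]
      tensor_id_comp[of mr dr A]
    by simp
  show "sound (equation (Action_assoc z))" "sound (equation (Action_unit z))"
    "sound (equation (Coaction_coassoc z))" "sound (equation (Coaction_counit z))"
    "sound (equation (Crossed z))"
    using axioms hom crossed_layers unfolding sound_def Z_def mr_def dr_def
    by (simp_all add: comp_normalize)
qed

lemma braid_word_wire_sound:
  "composable (U @ [b]) (braid_word_wire U b) \<and> diagram_cod (U @ [b]) (braid_word_wire U b) = b # U \<and>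
     diagram_mor (U @ [b]) (braid_word_wire U b) = Br C (word_obj U) (wire_obj b)"
proof (induction U)
  case Nil
  then show ?case by (simp add: braid_unit_left)
next
  case (Cons u U)
  let ?B = "map (whisker [u] []) (braid_word_wire U b)"
  have B: "composable (u # U @ [b]) ?B" "diagram_cod (u # U @ [b]) ?B = u # b # U"
    "diagram_mor (u # U @ [b]) ?B = TM C (Idm C (wire_obj u)) (Br C (word_obj U) (wire_obj b))"
    using Cons.IH composable_whisker[of "U @ [b]" _ "[u]" "[]"]
      diagram_mor_whisker[of "U @ [b]" _ "[u]" "[]"]
    by auto
  have "diagram_mor (u # U @ [b]) (?B @ [([], Braid u b, U)]) =
      Cmp C (TM C (Br C (wire_obj u) (wire_obj b)) (Idm C (word_obj U)))
        (TM C (Idm C (wire_obj u)) (Br C (word_obj U) (wire_obj b)))"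
    using B diagram_mor_append[of "u # U @ [b]" ?B] by (simp add: comp_id_left)
  also have "\<dots> = Br C (word_obj (u # U)) (wire_obj b)"
    by (simp add: braid_tensor_left)
  finally show ?case
    using B by simp
qed

lemma braid_wire_word_sound:
  "composable (b # U) (braid_wire_word b U) \<and> diagram_cod (b # U) (braid_wire_word b U) = U @ [b] \<and>
     diagram_mor (b # U) (braid_wire_word b U) = Br C (wire_obj b) (word_obj U)"
proof (induction U)
  case Nil
  then show ?case by (simp add: braid_unit_right)
next
  case (Cons u U)
  let ?B = "map (whisker [u] []) (braid_wire_word b U)"
  have B: "composable (u # b # U) ?B" "diagram_cod (u # b # U) ?B = u # U @ [b]"
    "diagram_mor (u # b # U) ?B = TM C (Idm C (wire_obj u)) (Br C (wire_obj b) (word_obj U))"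
    using Cons.IH composable_whisker[of "b # U" _ "[u]" "[]"]
      diagram_mor_whisker[of "b # U" _ "[u]" "[]"]
    by auto
  have "diagram_mor (b # u # U) (([], Braid b u, U) # ?B) =
      Cmp C (TM C (Idm C (wire_obj u)) (Br C (wire_obj b) (word_obj U)))
        (TM C (Br C (wire_obj b) (wire_obj u)) (Idm C (word_obj U)))"
    using B by simp
  also have "\<dots> = Br C (wire_obj b) (word_obj (u # U))"
    by (simp add: braid_tensor_right)
  finally show ?case
    using B by simp
qed

lemma sound_braid_natural [simp]:
  "sound (equation (Braid_natural_right g b))" "sound (equation (Braid_natural_left g b))"
proof -
  have "Cmp C (Br C (word_obj (box_cod g)) (wire_obj b)) (TM C (box_mor g) (Idm C (wire_obj b))) =
      Cmp C (TM C (Idm C (wire_obj b)) (box_mor g)) (Br C (word_obj (box_dom g)) (wire_obj b))"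
    using braid_natural[of "box_mor g" "Idm C (wire_obj b)"] by simp
  then show "sound (equation (Braid_natural_right g b))"
    using braid_word_wire_sound[of "box_cod g" b] braid_word_wire_sound[of "box_dom g" b]
      diagram_mor_append[of "box_dom g @ [b]" "braid_word_wire (box_dom g) b"]
    unfolding sound_def by (simp add: comp_id_left)
  have "Cmp C (Br C (wire_obj b) (word_obj (box_cod g))) (TM C (Idm C (wire_obj b)) (box_mor g)) =
      Cmp C (TM C (box_mor g) (Idm C (wire_obj b))) (Br C (wire_obj b) (word_obj (box_dom g)))"
    using braid_natural[of "Idm C (wire_obj b)" "box_mor g"] by simp
  then show "sound (equation (Braid_natural_left g b))"
    using braid_wire_word_sound[of b "box_cod g"] braid_wire_word_sound[of b "box_dom g"]
      diagram_mor_append[of "b # box_dom g" "braid_wire_word b (box_dom g)"]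
    unfolding sound_def by (simp add: comp_id_left)
qed

section \<open>Derived equations\<close>

lemma sound_antipode_braid_cancel [simp]: "sound (equation Antipode_braid_cancel)"
  unfolding equation.simps
  by (rule sound_swap, rule apply_steps_sound[where ss =
        "[Rewrite Unit_right 1 0 False, Swap 2, Rewrite Comult_unit 1 1 False,
          Rewrite Counit_right 0 0 False, Swap 1, Rewrite Antipode_right 2 1 False,
          Rewrite Bialgebra 4 1 True, Swap 7, Rewrite Mult_assoc 8 0 False, Swap 1, Swap 2,
          Swap 3, Swap 4, Swap 5, Swap 6, Rewrite Comult_coassoc 0 0 False, Swap 2,
          Rewrite Comult_coassoc 1 0 False, Swap 6, Swap 5, Swap 4, Swap 3, Swap 7, Swap 6,
          Swap 5, Swap 4, Rewrite Antipode_left 2 0 True, Rewrite Counit_left 1 0 True, Swap 1,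
          Swap 2, Swap 3, Swap 4, Rewrite Unit_left 5 0 True]"])
    (simp, simp add: Let_def, simp del: equation.simps)

lemma sound_tensor_counit_right [simp]: "sound (equation Tensor_counit_right)"
  unfolding equation.simps
  by (rule apply_steps_sound[where ss =
        "[Swap 2, Rewrite Counit_right 1 2 True,
          Rewrite (Braid_natural_right Counit WA) 1 1 False, Rewrite Counit_right 0 0 True]"])
    (simp, simp add: Let_def, simp del: equation.simps)

lemma sound_tensor_counit_left [simp]: "sound (equation Tensor_counit_left)"
  unfolding equation.simps
  by (rule apply_steps_sound[where ss =
        "[Rewrite (Braid_natural_left Counit WA) 2 1 False, Rewrite Counit_left 1 2 True,
          Rewrite Counit_left 0 0 True]"])
    (simp, simp add: Let_def, simp del: equation.simps)

lemma sound_tensor_coassoc [simp]: "sound (equation Tensor_coassoc)"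
  unfolding equation.simps
  by (rule apply_steps_sound[where ss =
        "[Swap 2, Swap 1, Rewrite (Braid_natural_left Comult WA) 3 2 False, Swap 5,
          Rewrite Comult_coassoc 0 0 True, Rewrite Comult_coassoc 2 3 True, Swap 1, Swap 3,
          Swap 4, Rewrite (Braid_natural_right Comult WA) 2 1 True]"])
    (simp, simp add: Let_def, simp del: equation.simps)

lemma sound_mult_conv_braided_antipode [simp]: "sound (equation Mult_conv_braided_antipode)"
  unfolding equation.simps
  by (rule apply_steps_sound[where ss =
        "[Swap 3, Rewrite (Braid_natural_left Comult WA) 1 1 True, Rewrite Mult_assoc 6 0 False,
          Swap 3, Swap 4, Rewrite Mult_assoc 5 0 True, Swap 3, Swap 2,
          Rewrite Antipode_right 3 1 True, Rewrite Unit_right 4 0 True, Swap 2,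
          Rewrite (Braid_natural_left Counit WA) 1 1 False, Swap 0,
          Rewrite Antipode_right 1 0 True]"])
    (simp, simp add: Let_def, simp del: equation.simps)

lemma sound_antipode_mult_conv_mult [simp]: "sound (equation Antipode_mult_conv_mult)"
  unfolding equation.simps
  by (rule apply_steps_sound[where ss =
        "[Swap 4, Rewrite Bialgebra 0 0 False, Rewrite Antipode_left 1 0 True,
          Rewrite Counit_mult 0 0 True]"])
    (simp, simp add: Let_def, simp del: equation.simps)

lemma sound_antipode_antimultiplicative [simp]: "sound (equation Antipode_antimultiplicative)"
  unfolding equation.simps
  by (rule apply_steps_sound[where ss =
        "[Rewrite Tensor_counit_right 0 0 False, Rewrite Unit_right 7 0 False, Swap 3, Swap 4,
          Swap 5, Swap 3, Swap 4, Swap 5, Rewrite Mult_conv_braided_antipode 5 1 False,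
          Rewrite Mult_assoc 13 0 False, Swap 4, Swap 5, Swap 6, Swap 3, Swap 4, Swap 5,
          Rewrite Tensor_coassoc 0 0 False, Swap 12, Swap 11, Swap 10, Swap 9,
          Rewrite Antipode_mult_conv_mult 3 0 True, Rewrite Tensor_counit_left 0 0 True, Swap 0,
          Swap 1, Swap 2, Swap 3, Rewrite Unit_left 4 0 True]"])
    (simp, simp add: Let_def, simp del: equation.simps)

lemma sound_tensor_action_assoc [simp]: "sound (equation Tensor_action_assoc)"
  unfolding equation.simps
  by (rule apply_steps_sound[where ss =
        "[Rewrite Bialgebra 0 2 True, Swap 4, Rewrite (Braid_natural_left Mult WX) 3 1 True,
          Swap 6, Rewrite (Action_assoc MY) 5 0 False, Rewrite (Action_assoc MX) 7 1 False,
          Swap 6, Swap 4, Swap 2, Swap 3, Swap 1, Swap 2,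
          Rewrite (Braid_natural_right (Action MX) WA) 4 1 False, Swap 3]"])
    (simp, simp add: Let_def, simp del: equation.simps)

lemma sound_yd_braid_tensor_action [simp]: "sound (equation Yd_braid_tensor_action)"
  unfolding equation.simps
  by (rule apply_steps_sound[where ss =
        "[Swap 4, Swap 5, Rewrite (Braid_natural_right (Action MY) WX) 6 0 True,
          Rewrite (Action_assoc MY) 8 1 True, Swap 7, Rewrite (Crossed MX) 2 1 True, Swap 1,
          Rewrite (Coaction_coassoc MX) 0 1 True, Swap 5, Rewrite Antipode_braid_cancel 1 2 True,
          Swap 2, Swap 3, Rewrite (Action_unit MY) 4 1 True]"])
    (simp, simp add: Let_def, simp del: equation.simps)

lemma sound_sigma_tensor_yd_braid [simp]: "sound (equation Sigma_tensor_yd_braid)"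
  unfolding equation.simps
  by (rule apply_steps_sound[where ss =
        "[Swap 2, Rewrite (Braid_natural_left (Coaction MY) WX) 1 0 False,
          Rewrite (Coaction_coassoc MY) 0 1 True, Swap 1, Rewrite (Crossed MX) 2 1 True,
          Rewrite Antipode_antimultiplicative 6 2 True, Rewrite Tensor_action_assoc 9 0 True,
          Swap 5, Rewrite (Braid_natural_left Comult WA) 3 2 True, Swap 5, Swap 6, Swap 7,
          Rewrite (Braid_natural_right (Action MX) WA) 8 1 True, Swap 10,
          Rewrite (Action_assoc MX) 11 1 True, Swap 10, Swap 9, Swap 5, Swap 4,
          Rewrite Antipode_braid_cancel 5 2 True, Swap 6, Swap 7,
          Rewrite (Action_unit MX) 8 1 True, Swap 4, Swap 5,
          Rewrite (Braid_natural_left Antipode WX) 4 1 True,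
          Rewrite (Braid_natural_right (Coaction MX) WA) 2 1 True,
          Rewrite (Braid_natural_left (Coaction MY) WX) 0 0 True, Swap 2, Swap 4, Swap 3]"])
    (simp, simp add: Let_def, simp del: equation.simps)

lemma diagram_mor_eq_by_steps:
  "composable w D \<Longrightarrow> apply_steps w ss D = Some D' \<Longrightarrow>
     \<forall>n\<in>set (rules_used ss). sound (equation n) \<Longrightarrow> diagram_mor w D = diagram_mor w D'"
  using apply_steps_sound unfolding sound_def by fastforce

lemma yd_conjugate_sigma_eq_diagram:
  "Cmp C (yd_braid C A Y mrY X drX)
     (Cmp C (sigma_map C S (TO C Y X) (tensor_action C A Delta Y mrY X mrX)
               (tensor_coaction C A mu Y drY X drX))
       (yd_braid C A X mrX Y drY)) =
   diagram_mor [WX,WY]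
     [([WX],Coaction MY,[]), ([],Braid WX WY,[WA]), ([WY],Action MX,[]),
      ([],Coaction MY,[WX]), ([WY,WA],Coaction MX,[]), ([WY],Braid WA WX,[WA]), ([WY,WX],Mult,[]),
      ([WY,WX],Antipode,[]),
      ([WY,WX],Comult,[]), ([WY],Braid WX WA,[WA]), ([],Action MY,[WX,WA]), ([WY],Action MX,[]),
      ([WY],Coaction MX,[]), ([],Braid WY WX,[WA]), ([WX],Action MY,[])]"
  unfolding yd_braid_def sigma_map_def tensor_action_def tensor_coaction_def
  by (simp only: tensor_split_left[of mrY mrX] tensor_split_left[of drY drX])
    (simp add: comp_normalize)

lemma braid_conjugate_sigma_eq_diagram:
  "Cmp C (Br C Y X) (Cmp C (TM C (sigma_map C S Y mrY drY) (sigma_map C S X mrX drX)) (Br C X Y)) =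
   diagram_mor [WX,WY]
     [([],Braid WX WY,[]),
      ([],Coaction MY,[WX]), ([WY],Antipode,[WX]), ([],Action MY,[WX]),
      ([WY],Coaction MX,[]), ([WY,WX],Antipode,[]), ([WY],Action MX,[]),
      ([],Braid WY WX,[])]"
proof -
  have "TM C (sigma_map C S Y mrY drY) (sigma_map C S X mrX drX) =
      Cmp C (TM C (Idm C Y) (sigma_map C S X mrX drX)) (TM C (sigma_map C S Y mrY drY) (Idm C X))"
    using tensor_split_left[of "sigma_map C S Y mrY drY" "sigma_map C S X mrX drX"]
    by (simp add: sigma_map_def)
  then show ?thesis
    unfolding sigma_map_def by (simp add: comp_normalize tensor_id_comp comp_tensor_id)
qed

end

theorem mainTheorem9:
  fixes C :: "('o, 'm) bmc"
    and A X Y :: 'o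
    and mu eta Delta eps S mrX drX mrY drY :: 'm
  assumes "braided_group C A mu eta Delta eps S"
    and "right_crossed_module C A mu eta Delta eps X mrX drX"
    and "right_crossed_module C A mu eta Delta eps Y mrY drY"
  shows "Cmp C (yd_braid C A Y mrY X drX)
           (Cmp C (sigma_map C S (TO C Y X)
                     (tensor_action C A Delta Y mrY X mrX)
                     (tensor_coaction C A mu Y drY X drX))
             (yd_braid C A X mrX Y drY)) =
         Cmp C (Br C Y X)
           (Cmp C (TM C (sigma_map C S Y mrY drY) (sigma_map C S X mrX drX))
             (Br C X Y))"
proof -
  interpret yd_pair C A X Y mu eta Delta eps S mrX drX mrY drY
    using assms by unfold_locales
  show ?thesis
    unfolding yd_conjugate_sigma_eq_diagram braid_conjugate_sigma_eq_diagram
    by (rule diagram_mor_eq_by_steps[where ss =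
        "[Rewrite Sigma_tensor_yd_braid 0 0 True, Rewrite Yd_braid_tensor_action 4 0 True]"])
      (simp, simp add: Let_def, simp del: equation.simps)
qed

end
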